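(* Let $n\ge1$ and let $(\rho,\alpha)$ satisfy either $\alpha\in(1,2)$ and $0\le\rho\le\frac{1-\theta(\alpha)}{1+\theta(\alpha)}$, or $\alpha\in[2,3]$ and $0\le\rho\le1$. Then $\mathbf{MaxStab}_\alpha(\tfrac12)$ is attained by dictator functions, i.e. for every $f:\{-1,1\}^n\to\{0,1\}$ with $\mathbb Ef(\mathbf X)=\tfrac12$, $\mathbb E[\Phi_\alpha(T_\rho f(\mathbf X))]\le\tfrac12\Phi_\alpha(\tfrac{1+\rho}{2})+\tfrac12\Phi_\alpha(\tfrac{1-\rho}{2})$.
   Context: $\mathbf X$ uniform on $\{-1,1\}^n$; $\mathbf Y$ obtained by independently flipping each coordinate of $\mathbf X$ with probability $(1-\rho)/2$; $T_\rho f(\mathbf x)=\mathbb E[f(\mathbf Y)\mid\mathbf X=\mathbf x]$. For $\alpha>1$, $\Phi_\alpha(t)=t\cdot\frac{t^{\alpha-1}-1}{\alpha-1}$ on $[0,1]$. $\mathbf{MaxStab}_\alpha(a)$ is the maximum of $\mathbb E[\Phi_\alpha(T_\rho f(\mathbf X))]$ over Boolean $f$ with $\mathbb Ef(\mathbf X)=a$. Dictator functions are $1\{x_k=1\}$, $1\{x_k=-1\}$. For $\alpha\in(1,2)$, $\theta(\alpha)$ is the unique solution $\theta\in(0,1)$ of $\theta^{2-\alpha}+\frac1\alpha(1-\theta)=1$. *)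

theory Defs
  imports Complex_Main "HOL-Library.FuncSet"
begin

definition cube :: "nat \<Rightarrow> (nat \<Rightarrow> real) set" where
  "cube n = PiE {..<n} (\<lambda>_. {-1, 1})"

definition cube_exp :: "nat \<Rightarrow> ((nat \<Rightarrow> real) \<Rightarrow> real) \<Rightarrow> real" where
  "cube_exp n g = (\<Sum>x\<in>cube n. g x) / 2 ^ n"

text \<open>Probability that Y = y given X = x, each coordinate flipped independently
  with probability (1 - rho)/2.\<close>
definition noise_kernel :: "nat \<Rightarrow> real \<Rightarrow> (nat \<Rightarrow> real) \<Rightarrow> (nat \<Rightarrow> real) \<Rightarrow> real" where
  "noise_kernel n \<rho> x y =
     (\<Prod>i<n. if y i = x i then (1 + \<rho>) / 2 else (1 - \<rho>) / 2)"

definition noise_op :: "nat \<Rightarrow> real \<Rightarrow> ((nat \<Rightarrow> real) \<Rightarrow> real) \<Rightarrow> (nat \<Rightarrow> real) \<Rightarrow> real" where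
  "noise_op n \<rho> f x = (\<Sum>y\<in>cube n. noise_kernel n \<rho> x y * f y)"

definition Phi :: "real \<Rightarrow> real \<Rightarrow> real" where
  "Phi \<alpha> t = t * ((t powr (\<alpha> - 1) - 1) / (\<alpha> - 1))"

definition theta :: "real \<Rightarrow> real" where
  "theta \<alpha> = (THE \<theta>. 0 < \<theta> \<and> \<theta> < 1 \<and> \<theta> powr (2 - \<alpha>) + (1 - \<theta>) / \<alpha> = 1)"

end

theory Submission
  imports Defs "HOL-Analysis.Derivative"
begin

text \<open>
  Let \<open>p = (1 + \<rho>)/2\<close>, \<open>q = (1 - \<rho>)/2\<close>, so that a dictator has value
  \<open>\<Phi>(p)/2 + \<Phi>(q)/2\<close>, and let \<open>T = T\<^sub>\<rho> f\<close>, which takes values in \<open>[0, 1]\<close>.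
  Suppose \<open>\<Phi>\<close> has quadratic majorants touching it at \<open>p\<close> and at \<open>q\<close>, with a common
  curvature \<open>c\<close>. Using the one at \<open>p\<close> where \<open>f = 1\<close> and the one at \<open>q\<close> where \<open>f = 0\<close>,
  the expectation of \<open>\<Phi>(T)\<close> is bounded in terms of \<open>E[f T]\<close> and \<open>E[T\<^sup>2]\<close> only. In the
  Fourier basis \<open>E[f T] \<le> (1 + \<rho>)/4\<close> and, since \<open>T\<^sub>\<rho> \<circ> T\<^sub>\<rho> = T\<^bsub>\<rho>\<^sup>2\<^esub>\<close>,
  \<open>E[T\<^sup>2] \<le> \<rho> E[f T] + (1 - \<rho>)/4\<close>; together they give the dictator value provided
  \<open>c \<rho> \<le> \<Phi>'(p) - \<Phi>'(q)\<close>.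

  For \<open>\<alpha> \<ge> 2\<close> the curvature \<open>c = \<alpha>/2\<close> works on all of \<open>[0, 1]\<close>, and the slope
  condition reduces to \<open>x powr (\<alpha> - 2) \<ge> x\<close> on \<open>[0, 1]\<close>, which needs \<open>\<alpha> \<le> 3\<close>. For
  \<open>\<alpha> < 2\<close> the second derivative of \<open>s powr \<alpha>\<close> decreases, so \<open>c = q powr (\<alpha> - 2)\<close> serves
  at both points; the slope condition then becomes \<open>theta_fun \<alpha> (q/p) \<ge> 1\<close>, and since
  \<open>theta_fun \<alpha>\<close> is strictly concave and equals \<open>1\<close> at \<open>\<theta>(\<alpha>)\<close> and at \<open>1\<close>, this
  holds exactly when \<open>q/p \<ge> \<theta>(\<alpha>)\<close>.
\<close>

section \<open>Fourier analysis on the cube\<close>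

lemma cube_memD: "x \<in> cube n \<Longrightarrow> i < n \<Longrightarrow> x i = -1 \<or> x i = 1"
  unfolding cube_def by (auto simp: PiE_iff)

lemma finite_cube [simp]: "finite (cube n)"
  unfolding cube_def by (rule finite_PiE) auto

lemma card_cube: "card (cube n) = 2 ^ n"
  unfolding cube_def by (simp add: card_PiE numeral_2_eq_2)

lemma sum_cube_prod:
  fixes g :: "nat \<Rightarrow> real \<Rightarrow> real"
  shows "(\<Sum>x\<in>cube n. \<Prod>i<n. g i (x i)) = (\<Prod>i<n. g i (-1) + g i 1)"
  using prod_sum_PiE[of "{..<n}" "\<lambda>_. {-1, 1}" g] by (simp add: cube_def)

lemma cube_exp_const [simp]: "cube_exp n (\<lambda>_. c) = c"
  by (simp add: cube_exp_def card_cube)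

lemma cube_exp_add: "cube_exp n (\<lambda>x. g x + h x) = cube_exp n g + cube_exp n h"
  by (simp add: cube_exp_def sum.distrib add_divide_distrib)

lemma cube_exp_cmult: "cube_exp n (\<lambda>x. c * g x) = c * cube_exp n g"
  by (simp add: cube_exp_def sum_distrib_left)

lemma cube_exp_cong:
  "(\<And>x. x \<in> cube n \<Longrightarrow> g x = h x) \<Longrightarrow> cube_exp n g = cube_exp n h"
  unfolding cube_exp_def by (simp cong: sum.cong)

lemma cube_exp_mono:
  "(\<And>x. x \<in> cube n \<Longrightarrow> g x \<le> h x) \<Longrightarrow> cube_exp n g \<le> cube_exp n h"
  unfolding cube_exp_def by (intro divide_right_mono sum_mono) auto

definition cube_char :: "nat set \<Rightarrow> (nat \<Rightarrow> real) \<Rightarrow> real" where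
  "cube_char S x = (\<Prod>i\<in>S. x i)"

definition fourier_coeff :: "nat \<Rightarrow> ((nat \<Rightarrow> real) \<Rightarrow> real) \<Rightarrow> nat set \<Rightarrow> real" where
  "fourier_coeff n h S = cube_exp n (\<lambda>x. h x * cube_char S x)"

lemma noise_kernel_commute: "noise_kernel n \<rho> x y = noise_kernel n \<rho> y x"
  unfolding noise_kernel_def by (intro prod.cong) auto

lemma noise_kernel_nonneg: "\<bar>\<rho>\<bar> \<le> 1 \<Longrightarrow> 0 \<le> noise_kernel n \<rho> x y"
  unfolding noise_kernel_def by (intro prod_nonneg) auto

text \<open>The semigroup law \<open>T\<^sub>\<rho> \<circ> T\<^sub>\<sigma> = T\<^bsub>\<rho>\<sigma>\<^esub>\<close>, at the level of kernels.\<close>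
lemma sum_noise_kernel_mult:
  assumes "y \<in> cube n" "z \<in> cube n"
  shows "(\<Sum>x\<in>cube n. noise_kernel n \<rho> x y * noise_kernel n \<sigma> x z) = noise_kernel n (\<rho> * \<sigma>) y z"
proof -
  let ?k = "\<lambda>\<rho> w v. if v = w then (1 + \<rho>) / 2 else (1 - \<rho>) / (2::real)"
  have "(\<Sum>x\<in>cube n. noise_kernel n \<rho> x y * noise_kernel n \<sigma> x z)
      = (\<Sum>x\<in>cube n. \<Prod>i<n. ?k \<rho> (x i) (y i) * ?k \<sigma> (x i) (z i))"
    by (simp add: noise_kernel_def prod.distrib)
  also have "\<dots> = (\<Prod>i<n. ?k \<rho> (-1) (y i) * ?k \<sigma> (-1) (z i) + ?k \<rho> 1 (y i) * ?k \<sigma> 1 (z i))"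
    by (rule sum_cube_prod)
  also have "\<dots> = noise_kernel n (\<rho> * \<sigma>) y z"
    unfolding noise_kernel_def
  proof (rule prod.cong[OF refl])
    fix i assume "i \<in> {..<n}"
    then have "y i = -1 \<or> y i = 1" "z i = -1 \<or> z i = 1"
      using cube_memD assms by auto
    then show "?k \<rho> (-1) (y i) * ?k \<sigma> (-1) (z i) + ?k \<rho> 1 (y i) * ?k \<sigma> 1 (z i)
        = ?k (\<rho> * \<sigma>) (y i) (z i)"
      by (auto simp: field_simps)
  qed
  finally show ?thesis .
qed

lemma sum_noise_kernel:
  assumes "y \<in> cube n"
  shows "(\<Sum>x\<in>cube n. noise_kernel n \<rho> x y) = 1"
proof -
  let ?k = "\<lambda>w v. if v = w then (1 + \<rho>) / 2 else (1 - \<rho>) / (2::real)"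
  have "(\<Sum>x\<in>cube n. noise_kernel n \<rho> x y) = (\<Sum>x\<in>cube n. \<Prod>i<n. ?k (x i) (y i))"
    by (simp add: noise_kernel_def)
  also have "\<dots> = (\<Prod>i<n. ?k (-1) (y i) + ?k 1 (y i))"
    by (rule sum_cube_prod)
  also have "\<dots> = (\<Prod>i<n. 1)"
    using cube_memD[OF assms] by (intro prod.cong) (auto simp: field_simps)
  finally show ?thesis by simp
qed

lemma noise_kernel_fourier:
  assumes "x \<in> cube n" "y \<in> cube n"
  shows "noise_kernel n \<rho> x y
    = (\<Sum>S\<in>Pow {..<n}. \<rho> ^ card S * cube_char S x * cube_char S y) / 2 ^ n"
proof -
  have "noise_kernel n \<rho> x y = (\<Prod>i<n. (\<rho> * x i * y i + 1) / 2)"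
    unfolding noise_kernel_def
  proof (intro prod.cong refl)
    fix i assume "i \<in> {..<n}"
    then have "x i = -1 \<or> x i = 1" "y i = -1 \<or> y i = 1"
      using cube_memD assms by auto
    then show "(if y i = x i then (1 + \<rho>) / 2 else (1 - \<rho>) / 2) = (\<rho> * x i * y i + 1) / 2"
      by auto
  qed
  also have "\<dots> = (\<Sum>S\<in>Pow {..<n}. (\<Prod>i\<in>S. \<rho> * x i * y i)) / 2 ^ n"
    by (simp add: prod_dividef prod_add)
  also have "\<dots> = (\<Sum>S\<in>Pow {..<n}. \<rho> ^ card S * cube_char S x * cube_char S y) / 2 ^ n"
    by (simp add: cube_char_def prod.distrib)
  finally show ?thesis .
qed

lemma noise_kernel_1:
  assumes "x \<in> cube n" "y \<in> cube n"
  shows "noise_kernel n 1 x y = (if x = y then 1 else 0)"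
proof (cases "x = y")
  case False
  then obtain i where "i < n" "x i \<noteq> y i"
    using assms PiE_ext[of x "{..<n}" "\<lambda>_. {-1, 1}" y] unfolding cube_def by auto
  then show ?thesis
    unfolding noise_kernel_def by (auto intro!: prod_zero)
qed (simp add: noise_kernel_def)

lemma noise_op_1:
  assumes "x \<in> cube n"
  shows "noise_op n 1 h x = h x"
proof -
  have "noise_op n 1 h x = (\<Sum>y\<in>cube n. if x = y then h y else 0)"
    unfolding noise_op_def using assms by (intro sum.cong) (auto simp: noise_kernel_1)
  then show ?thesis
    using assms by simp
qed

lemma cube_exp_noise_op: "cube_exp n (noise_op n \<rho> h) = cube_exp n h"
proof -
  have "(\<Sum>x\<in>cube n. noise_op n \<rho> h x) = (\<Sum>y\<in>cube n. (\<Sum>x\<in>cube n. noise_kernel n \<rho> x y) * h y)"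
    unfolding noise_op_def sum_distrib_right by (rule sum.swap)
  then show ?thesis
    by (simp add: cube_exp_def sum_noise_kernel)
qed

lemma noise_op_bounds:
  assumes "\<bar>\<rho>\<bar> \<le> 1" "x \<in> cube n" "\<And>y. y \<in> cube n \<Longrightarrow> 0 \<le> h y \<and> h y \<le> 1"
  shows "0 \<le> noise_op n \<rho> h x" "noise_op n \<rho> h x \<le> 1"
proof -
  show "0 \<le> noise_op n \<rho> h x"
    unfolding noise_op_def using assms by (intro sum_nonneg mult_nonneg_nonneg noise_kernel_nonneg) auto
  have "noise_op n \<rho> h x \<le> (\<Sum>y\<in>cube n. noise_kernel n \<rho> y x)"
    unfolding noise_op_def using assms
    by (intro sum_mono) (simp add: noise_kernel_nonneg noise_kernel_commute mult_left_le)
  then show "noise_op n \<rho> h x \<le> 1"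
    using sum_noise_kernel[OF assms(2)] by simp
qed

lemma cube_exp_noise_op_sq:
  "cube_exp n (\<lambda>x. (noise_op n \<rho> h x)\<^sup>2) = cube_exp n (\<lambda>y. h y * noise_op n (\<rho>\<^sup>2) h y)"
proof -
  have "(\<Sum>x\<in>cube n. (noise_op n \<rho> h x)\<^sup>2)
      = (\<Sum>x\<in>cube n. \<Sum>y\<in>cube n. \<Sum>z\<in>cube n. h y * h z * (noise_kernel n \<rho> x y * noise_kernel n \<rho> x z))"
    unfolding noise_op_def power2_eq_square sum_product by (simp add: mult_ac)
  also have "\<dots> = (\<Sum>y\<in>cube n. \<Sum>z\<in>cube n. h y * h z * (\<Sum>x\<in>cube n. noise_kernel n \<rho> x y * noise_kernel n \<rho> x z))"
    unfolding sum_distrib_left by (subst sum.swap, rule sum.cong[OF refl], rule sum.swap)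
  also have "\<dots> = (\<Sum>y\<in>cube n. \<Sum>z\<in>cube n. h y * h z * noise_kernel n (\<rho>\<^sup>2) y z)"
    by (intro sum.cong refl) (simp add: sum_noise_kernel_mult power2_eq_square)
  also have "\<dots> = (\<Sum>y\<in>cube n. h y * noise_op n (\<rho>\<^sup>2) h y)"
    unfolding noise_op_def sum_distrib_left by (intro sum.cong refl) (simp add: mult_ac)
  finally show ?thesis
    by (simp add: cube_exp_def)
qed

lemma cube_exp_mult_noise_op:
  "cube_exp n (\<lambda>x. h x * noise_op n \<rho> h x) = (\<Sum>S\<in>Pow {..<n}. \<rho> ^ card S * (fourier_coeff n h S)\<^sup>2)"
proof -
  let ?c = "\<lambda>S x. h x * cube_char S x"
  have "(\<Sum>x\<in>cube n. h x * noise_op n \<rho> h x)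
      = (\<Sum>x\<in>cube n. \<Sum>y\<in>cube n. (\<Sum>S\<in>Pow {..<n}. \<rho> ^ card S * (?c S x * ?c S y)) / 2 ^ n)"
    unfolding noise_op_def sum_distrib_left
    by (intro sum.cong refl) (simp add: noise_kernel_fourier sum_distrib_left sum_distrib_right mult_ac)
  also have "\<dots> = (\<Sum>x\<in>cube n. \<Sum>y\<in>cube n. \<Sum>S\<in>Pow {..<n}. \<rho> ^ card S * (?c S x * ?c S y)) / 2 ^ n"
    by (simp add: sum_divide_distrib)
  also have "(\<Sum>x\<in>cube n. \<Sum>y\<in>cube n. \<Sum>S\<in>Pow {..<n}. \<rho> ^ card S * (?c S x * ?c S y))
      = (\<Sum>S\<in>Pow {..<n}. \<Sum>x\<in>cube n. \<Sum>y\<in>cube n. \<rho> ^ card S * (?c S x * ?c S y))"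
    by (subst sum.swap, rule sum.cong[OF refl], subst sum.swap) (rule refl)
  also have "\<dots> = (\<Sum>S\<in>Pow {..<n}. \<rho> ^ card S * ((\<Sum>x\<in>cube n. ?c S x) * (\<Sum>y\<in>cube n. ?c S y)))"
    unfolding sum_product by (simp only: sum_distrib_left)
  finally have "cube_exp n (\<lambda>x. h x * noise_op n \<rho> h x)
      = (\<Sum>S\<in>Pow {..<n}. \<rho> ^ card S * ((\<Sum>x\<in>cube n. ?c S x) * (\<Sum>y\<in>cube n. ?c S y))) / 2 ^ n / 2 ^ n"
    by (simp add: cube_exp_def)
  also have "\<dots> = (\<Sum>S\<in>Pow {..<n}. \<rho> ^ card S * (fourier_coeff n h S)\<^sup>2)"
    unfolding sum_divide_distrib
    by (intro sum.cong refl) (simp add: fourier_coeff_def cube_exp_def power2_eq_square)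
  finally show ?thesis .
qed

lemma fourier_coeff_empty: "fourier_coeff n h {} = cube_exp n h"
  by (simp add: fourier_coeff_def cube_char_def)

lemma parseval: "cube_exp n (\<lambda>x. (h x)\<^sup>2) = (\<Sum>S\<in>Pow {..<n}. (fourier_coeff n h S)\<^sup>2)"
proof -
  have "cube_exp n (\<lambda>x. (h x)\<^sup>2) = cube_exp n (\<lambda>x. h x * noise_op n 1 h x)"
    by (rule cube_exp_cong) (simp add: noise_op_1 power2_eq_square)
  then show ?thesis
    by (simp add: cube_exp_mult_noise_op)
qed

section \<open>Noise stability of balanced Boolean functions\<close>

lemma sum_Pow_power_card_le:
  fixes a :: "'a set \<Rightarrow> real"
  assumes "finite A" "0 \<le> \<rho>" "\<rho> \<le> 1" "\<And>S. 0 \<le> a S"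
  shows "(\<Sum>S\<in>Pow A. \<rho> ^ card S * a S) \<le> (1 - \<rho>) * a {} + \<rho> * (\<Sum>S\<in>Pow A. a S)"
proof -
  have "\<rho> ^ card S \<le> \<rho>" if "S \<in> Pow A - {{}}" for S
    using that assms finite_subset[of S A] power_decreasing[of 1 "card S" \<rho>]
    by (auto simp: Suc_le_eq card_gt_0_iff)
  then have "(\<Sum>S\<in>Pow A - {{}}. \<rho> ^ card S * a S) \<le> (\<Sum>S\<in>Pow A - {{}}. \<rho> * a S)"
    using assms(4) by (intro sum_mono mult_right_mono) auto
  moreover have "{} \<in> Pow A" by simp
  ultimately show ?thesis
    using assms(1) by (simp add: sum.remove[of "Pow A" "{}"] sum_distrib_left[symmetric] algebra_simps)
qed

lemma cube_exp_mult_noise_op_le: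
  assumes "0 \<le> \<rho>" "\<rho> \<le> 1"
  shows "cube_exp n (\<lambda>x. h x * noise_op n \<rho> h x)
    \<le> (1 - \<rho>) * (cube_exp n h)\<^sup>2 + \<rho> * cube_exp n (\<lambda>x. (h x)\<^sup>2)"
  unfolding cube_exp_mult_noise_op parseval
  using sum_Pow_power_card_le[of "{..<n}" \<rho> "\<lambda>S. (fourier_coeff n h S)\<^sup>2"] assms
  by (simp add: fourier_coeff_empty)

lemma cube_exp_noise_op_sq_le:
  assumes "0 \<le> \<rho>" "\<rho> \<le> 1"
  shows "cube_exp n (\<lambda>x. (noise_op n \<rho> h x)\<^sup>2)
    \<le> \<rho> * cube_exp n (\<lambda>x. h x * noise_op n \<rho> h x) + (1 - \<rho>) * (cube_exp n h)\<^sup>2"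
  unfolding cube_exp_noise_op_sq cube_exp_mult_noise_op
  using sum_Pow_power_card_le[of "{..<n}" \<rho> "\<lambda>S. \<rho> ^ card S * (fourier_coeff n h S)\<^sup>2"] assms
  by (simp add: fourier_coeff_empty power_mult_distrib power2_eq_square mult.assoc)

lemma balanced_noise_moments:
  assumes "0 \<le> \<rho>" "\<rho> \<le> 1" and boolean: "\<forall>x\<in>cube n. f x \<in> {0, 1}" and mean: "cube_exp n f = 1 / 2"
  shows "cube_exp n (\<lambda>x. f x * noise_op n \<rho> f x) \<le> (1 + \<rho>) / 4"
    and "cube_exp n (\<lambda>x. (noise_op n \<rho> f x)\<^sup>2)
      \<le> \<rho> * cube_exp n (\<lambda>x. f x * noise_op n \<rho> f x) + (1 - \<rho>) / 4"
proof -
  have "cube_exp n (\<lambda>x. (f x)\<^sup>2) = cube_exp n f"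
    using boolean by (intro cube_exp_cong) auto
  then have mean_sq: "cube_exp n (\<lambda>x. (f x)\<^sup>2) = 1 / 2"
    using mean by simp
  show "cube_exp n (\<lambda>x. f x * noise_op n \<rho> f x) \<le> (1 + \<rho>) / 4"
    using cube_exp_mult_noise_op_le[OF assms(1,2), of n f, unfolded mean mean_sq]
    by (simp add: power2_eq_square field_simps)
  show "cube_exp n (\<lambda>x. (noise_op n \<rho> f x)\<^sup>2)
      \<le> \<rho> * cube_exp n (\<lambda>x. f x * noise_op n \<rho> f x) + (1 - \<rho>) / 4"
    using cube_exp_noise_op_sq_le[OF assms(1,2), of n f] mean by (simp add: power2_eq_square)
qed

lemma cube_exp_noise_le_dictator:
  fixes \<phi> d :: "real \<Rightarrow> real"
  assumes "0 \<le> \<rho>" "\<rho> \<le> 1" "0 \<le> c"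
    and boolean: "\<forall>x\<in>cube n. f x \<in> {0, 1}" and mean: "cube_exp n f = 1 / 2"
    and majorant: "\<And>t s. t \<in> {(1 + \<rho>) / 2, (1 - \<rho>) / 2} \<Longrightarrow> 0 \<le> s \<Longrightarrow> s \<le> 1 \<Longrightarrow>
      \<phi> s \<le> \<phi> t + d t * (s - t) + c * (s - t)\<^sup>2"
    and slope: "c * \<rho> \<le> d ((1 + \<rho>) / 2) - d ((1 - \<rho>) / 2)"
  shows "cube_exp n (\<lambda>x. \<phi> (noise_op n \<rho> f x))
    \<le> 1/2 * \<phi> ((1 + \<rho>) / 2) + 1/2 * \<phi> ((1 - \<rho>) / 2)"
proof -
  define p q where "p = (1 + \<rho>) / 2" and "q = (1 - \<rho>) / 2"
  define T where "T = noise_op n \<rho> f"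
  define a0 a1 b0 b1 where "a0 = \<phi> q - d q * q + c * q\<^sup>2" and "a1 = d q - 2 * c * q"
    and "b0 = \<phi> p - d p * p + c * p\<^sup>2 - a0" and "b1 = d p - 2 * c * p - a1"
  have pointwise: "\<phi> (T x) \<le> a0 + a1 * T x + c * (T x)\<^sup>2 + b0 * f x + b1 * (f x * T x)"
    if x: "x \<in> cube n" for x
  proof -
    have "0 \<le> f y \<and> f y \<le> 1" if "y \<in> cube n" for y
      using boolean that by auto
    then have "0 \<le> T x" "T x \<le> 1"
      unfolding T_def using noise_op_bounds[OF _ x] assms by auto
    then have Q: "\<phi> (T x) \<le> \<phi> t + d t * (T x - t) + c * (T x - t)\<^sup>2" if "t \<in> {p, q}" for t
      using majorant that unfolding p_def q_def by blast
    from boolean x have "f x = 0 \<or> f x = 1"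
      by auto
    then show ?thesis
    proof
      assume "f x = 0"
      then show ?thesis
        using Q[of q] unfolding a0_def a1_def by (simp add: algebra_simps power2_eq_square)
    next
      assume "f x = 1"
      then show ?thesis
        using Q[of p] unfolding a0_def a1_def b0_def b1_def by (simp add: algebra_simps power2_eq_square)
    qed
  qed
  define Y Z where "Y = cube_exp n (\<lambda>x. f x * T x)" and "Z = cube_exp n (\<lambda>x. (T x)\<^sup>2)"
  have Y_le: "Y \<le> (1 + \<rho>) / 4" and Z_le: "Z \<le> \<rho> * Y + (1 - \<rho>) / 4"
    using balanced_noise_moments[OF assms(1,2) boolean mean] by (simp_all add: Y_def Z_def T_def)
  have "cube_exp n (\<lambda>x. \<phi> (T x)) \<le> cube_exp n (\<lambda>x. a0 + a1 * T x + c * (T x)\<^sup>2 + b0 * f x + b1 * (f x * T x))"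
    by (rule cube_exp_mono) (rule pointwise)
  also have "\<dots> = a0 + a1 / 2 + c * Z + b0 / 2 + b1 * Y"
    by (simp add: cube_exp_add cube_exp_cmult cube_exp_noise_op mean Y_def Z_def T_def)
  txt \<open>The excess over the dictator value is a combination of the slacks of \<open>Y_le\<close> and \<open>Z_le\<close>.\<close>
  also have "\<dots> = 1/2 * \<phi> p + 1/2 * \<phi> q
      + c * (Z - (\<rho> * Y + (1 - \<rho>) / 4)) - (d p - d q - c * \<rho>) * ((1 + \<rho>) / 4 - Y)"
    unfolding a0_def a1_def b0_def b1_def p_def q_def by (simp add: field_simps power2_eq_square)
  also have "\<dots> \<le> 1/2 * \<phi> p + 1/2 * \<phi> q"
    using mult_nonneg_nonpos[OF \<open>0 \<le> c\<close>, of "Z - (\<rho> * Y + (1 - \<rho>) / 4)"]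
      mult_nonneg_nonneg[of "d p - d q - c * \<rho>" "(1 + \<rho>) / 4 - Y"] Z_le Y_le slope
    unfolding p_def q_def by linarith
  finally show ?thesis
    unfolding T_def p_def q_def .
qed

section \<open>Inequalities for real powers\<close>

lemma exp_gt_add_one:
  fixes x :: real
  assumes "x \<noteq> 0"
  shows "1 + x < exp x"
proof (cases "0 \<le> 1 + x / 2")
  case True
  have "(1 + x / 2)\<^sup>2 = 1 + x + x\<^sup>2 / 4"
    by (simp add: power2_eq_square field_simps)
  then have "1 + x < (1 + x / 2)\<^sup>2"
    using assms by simp
  also have "\<dots> \<le> (exp (x / 2))\<^sup>2"
    using True exp_ge_add_one_self[of "x / 2"] by (intro power_mono) auto
  also have "\<dots> = exp x"
    by (simp flip: exp_double)
  finally show ?thesis .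
next
  case False
  then show ?thesis
    using exp_gt_zero[of x] by linarith
qed

lemma Youngs_inequality_0_strict:
  fixes a b :: real
  assumes "0 < l" "l < 1" "0 < a" "0 < b" "a \<noteq> b"
  shows "a powr l * b powr (1 - l) < l * a + (1 - l) * b"
proof -
  define m where "m = l * ln a + (1 - l) * ln b"
  have tangent: "exp m * (1 + (y - m)) \<le> exp y" for y
  proof -
    have "exp m * (1 + (y - m)) \<le> exp m * exp (y - m)"
      by (intro mult_left_mono) auto
    then show ?thesis
      by (simp flip: exp_add)
  qed
  have "ln a - m = (1 - l) * (ln a - ln b)"
    unfolding m_def by (simp add: algebra_simps)
  then have "ln a \<noteq> m"
    using assms by auto
  then have "exp m * (1 + (ln a - m)) < exp m * exp (ln a - m)"
    using exp_gt_add_one[of "ln a - m"] by simp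
  also have "\<dots> = a"
    using assms by (simp flip: exp_add)
  finally have "exp m * (1 + (ln a - m)) < a" .
  then have "l * (exp m * (1 + (ln a - m))) + (1 - l) * (exp m * (1 + (ln b - m))) < l * a + (1 - l) * b"
    using tangent[of "ln b"] assms by (intro add_less_le_mono mult_strict_left_mono mult_left_mono) auto
  moreover have "l * (exp m * (1 + (ln a - m))) + (1 - l) * (exp m * (1 + (ln b - m))) = exp m"
    unfolding m_def by (simp add: algebra_simps)
  moreover have "exp m = a powr l * b powr (1 - l)"
    unfolding m_def using assms by (simp add: powr_def exp_add mult_ac)
  ultimately show ?thesis
    by simp
qed

lemma powr_less_tangent:
  fixes g x m :: real
  assumes "0 < g" "g < 1" "0 < x" "0 < m" "x \<noteq> m"
  shows "x powr g < m powr g + g * m powr (g - 1) * (x - m)"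
proof -
  have inv: "m powr (g - 1) * m powr (1 - g) = 1"
    using assms by (simp flip: powr_add)
  have base: "m * m powr (g - 1) = m powr g"
    using assms by (simp add: powr_mult_base)
  have "x powr g = m powr (g - 1) * (x powr g * m powr (1 - g))"
    by (metis inv mult.left_commute mult_1_right)
  also have "\<dots> < m powr (g - 1) * (g * x + (1 - g) * m)"
    using Youngs_inequality_0_strict[of g x m] assms by (intro mult_strict_left_mono) auto
  also have "\<dots> = m powr g + g * m powr (g - 1) * (x - m)"
    by (simp add: algebra_simps base)
  finally show ?thesis .
qed

lemma powr_le_linear:
  fixes u \<beta> :: real
  assumes "0 \<le> \<beta>" "\<beta> \<le> 1" "0 \<le> u"
  shows "u powr \<beta> \<le> \<beta> * u + (1 - \<beta>)"
proof (cases "u = 0")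
  case False
  then have "u powr \<beta> * 1 powr (1 - \<beta>) \<le> \<beta> * u + (1 - \<beta>) * 1"
    using assms by (intro Youngs_inequality_0) auto
  then show ?thesis
    by simp
next
  case True
  then show ?thesis
    using assms by simp
qed

lemma powr_diff_le:
  fixes b u v :: real
  assumes "1 \<le> b" "0 \<le> u" "u \<le> v" "v \<le> 1"
  shows "v powr b - u powr b \<le> b * (v - u)"
proof (cases "u = 0")
  case True
  have "v powr b \<le> v powr 1"
    using assms by (intro powr_mono') auto
  also have "\<dots> = v"
    using assms by simp
  also have "\<dots> \<le> b * v"
    using assms mult_right_mono[of 1 b v] by simp
  finally show ?thesis
    using True by simp
next
  case False
  have u: "u \<in> {0<..}"
    using False assms by simp
  have v: "v \<in> interior {0<..}"
    using u assms by (subst interior_open) auto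
  have "((\<lambda>x. x powr b) has_real_derivative b * v powr (b - 1)) (at v within {0<..})"
    using u assms by (intro has_field_derivative_at_within[OF has_real_derivative_powr]) auto
  then have "b * v powr (b - 1) * (u - v) \<le> u powr b - v powr b"
    using convex_on_imp_above_tangent[OF powr_convex[OF assms(1)] connected_Ioi v u] by simp
  moreover have "b * v powr (b - 1) * (v - u) \<le> b * 1 * (v - u)"
    using assms by (intro mult_right_mono mult_left_mono powr_le1) auto
  ultimately show ?thesis
    by (simp add: algebra_simps)
qed

text \<open>The concave \<open>(s / t) powr (\<alpha> - 1)\<close> lies below its tangent at \<open>1\<close>; this gives the
  curvature \<open>(\<alpha> - 1) * t powr (\<alpha> - 2)\<close>, which only grows when \<open>t\<close> is replaced by a smaller \<open>q\<close>.\<close>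
lemma powr_quadratic_majorant_le2:
  fixes \<alpha> s t q :: real
  assumes "1 \<le> \<alpha>" "\<alpha> \<le> 2" "0 \<le> s" "0 < q" "q \<le> t"
  shows "s powr \<alpha> \<le> t powr \<alpha> + \<alpha> * t powr (\<alpha> - 1) * (s - t) + (\<alpha> - 1) * q powr (\<alpha> - 2) * (s - t)\<^sup>2"
proof -
  have t: "0 < t"
    using assms by simp
  define T where "T = t powr (\<alpha> - 2)"
  have t1: "t powr (\<alpha> - 1) = t * T" and t2: "t powr \<alpha> = t * (t * T)"
    using t by (simp_all add: T_def powr_mult_base)
  have "s powr \<alpha> \<le> T * ((\<alpha> - 1) * s\<^sup>2 + (2 - \<alpha>) * t * s)"
  proof (cases "s = 0")
    case False
    then have s: "0 < s"
      using assms by simp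
    have "s powr \<alpha> = s * (s / t) powr (\<alpha> - 1) * t powr (\<alpha> - 1)"
      using s t by (simp add: powr_divide powr_mult_base)
    also have "\<dots> \<le> s * ((\<alpha> - 1) * (s / t) + (1 - (\<alpha> - 1))) * t powr (\<alpha> - 1)"
      using assms s t powr_le_linear[of "\<alpha> - 1" "s / t"] by (intro mult_right_mono mult_left_mono) auto
    also have "\<dots> = T * ((\<alpha> - 1) * s\<^sup>2 + (2 - \<alpha>) * t * s)"
      using t unfolding t1 by (simp add: field_simps power2_eq_square)
    finally show ?thesis .
  qed simp
  also have "\<dots> = t powr \<alpha> + \<alpha> * t powr (\<alpha> - 1) * (s - t) + (\<alpha> - 1) * T * (s - t)\<^sup>2"
    unfolding t1 t2 by (simp add: algebra_simps power2_eq_square)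
  also have "\<dots> \<le> t powr \<alpha> + \<alpha> * t powr (\<alpha> - 1) * (s - t) + (\<alpha> - 1) * q powr (\<alpha> - 2) * (s - t)\<^sup>2"
    unfolding T_def using assms by (intro add_left_mono mult_right_mono mult_left_mono powr_mono2') auto
  finally show ?thesis .
qed

lemma DERIV_sign_change_imp_min:
  fixes D D' :: "real \<Rightarrow> real"
  assumes cont: "continuous_on {a..b} D" and "t \<in> {a..b}" "s \<in> {a..b}"
    and deriv: "\<And>x. a < x \<Longrightarrow> x < b \<Longrightarrow> (D has_real_derivative D' x) (at x)"
    and left: "\<And>x. a < x \<Longrightarrow> x < t \<Longrightarrow> D' x \<le> 0"
    and right: "\<And>x. t < x \<Longrightarrow> x < b \<Longrightarrow> 0 \<le> D' x"
  shows "D t \<le> D s"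
proof (cases "t \<le> s")
  case True
  then show ?thesis
  proof (rule DERIV_nonneg_imp_increasing_open)
    fix x assume "t < x" "x < s"
    then show "\<exists>y. (D has_real_derivative y) (at x) \<and> 0 \<le> y"
      using assms by (intro exI[of _ "D' x"]) auto
  next
    show "continuous_on {t..s} D"
      using assms by (intro continuous_on_subset[OF cont]) auto
  qed
next
  case False
  then have "s \<le> t"
    by simp
  then show ?thesis
  proof (rule DERIV_nonpos_imp_decreasing_open)
    fix x assume "s < x" "x < t"
    then show "\<exists>y. (D has_real_derivative y) (at x) \<and> y \<le> 0"
      using assms by (intro exI[of _ "D' x"]) auto
  next
    show "continuous_on {s..t} D"
      using assms by (intro continuous_on_subset[OF cont]) auto
  qed
qed

lemma powr_quadratic_majorant_ge2:
  fixes \<alpha> s t :: real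
  assumes "2 \<le> \<alpha>" "0 \<le> s" "s \<le> 1" "0 \<le> t" "t \<le> 1"
  shows "s powr \<alpha> \<le> t powr \<alpha> + \<alpha> * t powr (\<alpha> - 1) * (s - t) + \<alpha> * (\<alpha> - 1) / 2 * (s - t)\<^sup>2"
proof -
  define D where "D x = t powr \<alpha> + \<alpha> * t powr (\<alpha> - 1) * (x - t) + \<alpha> * (\<alpha> - 1) / 2 * (x - t)\<^sup>2 - x powr \<alpha>" for x
  define D' where "D' x = \<alpha> * ((\<alpha> - 1) * (x - t) - (x powr (\<alpha> - 1) - t powr (\<alpha> - 1)))" for x
  txt \<open>\<open>D\<close> decreases up to \<open>t\<close> and increases afterwards, because \<open>x powr (\<alpha> - 1)\<close> is
    \<open>(\<alpha> - 1)\<close>-Lipschitz on \<open>[0, 1]\<close> (\<open>powr_diff_le\<close>).\<close>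
  have "continuous_on {0..1} D"
    unfolding D_def using assms
    by (intro continuous_intros continuous_on_powr'[OF continuous_on_id continuous_on_const]) auto
  moreover have "(D has_real_derivative D' x) (at x)" if "0 < x" for x
  proof -
    have "((\<lambda>x. t powr \<alpha> + \<alpha> * t powr (\<alpha> - 1) * (x - t) + \<alpha> * (\<alpha> - 1) / 2 * (x - t)\<^sup>2)
        has_real_derivative \<alpha> * t powr (\<alpha> - 1) + \<alpha> * (\<alpha> - 1) * (x - t)) (at x)"
      by (auto intro!: derivative_eq_intros simp: field_simps)
    from DERIV_diff[OF this has_real_derivative_powr[OF that]] show ?thesis
      unfolding D_def D'_def by (rule DERIV_cong) (simp add: algebra_simps)
  qed
  moreover have "D' x \<le> 0" if "0 < x" "x < t" for x
  proof -
    have "t powr (\<alpha> - 1) - x powr (\<alpha> - 1) \<le> (\<alpha> - 1) * (t - x)"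
      using that assms by (intro powr_diff_le) auto
    then have "(\<alpha> - 1) * (x - t) - (x powr (\<alpha> - 1) - t powr (\<alpha> - 1)) \<le> 0"
      by (simp add: algebra_simps)
    then show ?thesis
      using assms by (simp add: D'_def mult_nonneg_nonpos)
  qed
  moreover have "0 \<le> D' x" if "t < x" "x < 1" for x
    using powr_diff_le[of "\<alpha> - 1" t x] that assms by (simp add: D'_def)
  ultimately have "D t \<le> D s"
    using assms by (intro DERIV_sign_change_imp_min[of 0 1 D t s D']) auto
  then show ?thesis
    unfolding D_def by simp
qed

lemma powr_diff_half_ge:
  fixes b \<rho> :: real
  assumes "1 \<le> b" "b \<le> 2" "0 \<le> \<rho>" "\<rho> \<le> 1"
  shows "b * \<rho> / 2 \<le> ((1 + \<rho>) / 2) powr b - ((1 - \<rho>) / 2) powr b"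
proof -
  define k where "k x = x powr b - (1 - x) powr b - b * (2 * x - 1) / 2" for x
  define p where "p = (1 + \<rho>) / 2"
  have p: "1 / 2 \<le> p" "p \<le> 1"
    using assms by (auto simp: p_def)
  have "k (1 / 2) \<le> k p"
  proof (rule DERIV_nonneg_imp_increasing_open[OF p(1)])
    fix x assume x: "1 / 2 < x" "x < p"
    then have x01: "0 < x" "0 < 1 - x"
      using p by auto
    have "(k has_real_derivative b * x powr (b - 1) + b * (1 - x) powr (b - 1) - b) (at x)"
      unfolding k_def using x01 by (auto intro!: derivative_eq_intros simp: field_simps)
    moreover have "x \<le> x powr (b - 1)" "1 - x \<le> (1 - x) powr (b - 1)"
      using powr_mono'[of "b - 1" 1 x] powr_mono'[of "b - 1" 1 "1 - x"] x01 assms by auto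
    then have "0 \<le> b * x powr (b - 1) + b * (1 - x) powr (b - 1) - b"
      using assms mult_left_mono[of 1 "x powr (b - 1) + (1 - x) powr (b - 1)" b] by (simp add: algebra_simps)
    ultimately show "\<exists>y. (k has_real_derivative y) (at x) \<and> 0 \<le> y"
      by blast
  next
    show "continuous_on {1 / 2..p} k"
      unfolding k_def using assms p
      by (intro continuous_intros continuous_on_powr'[OF continuous_on_id continuous_on_const]
          continuous_on_powr'[OF _ continuous_on_const]) auto
  qed
  moreover have "1 - p = (1 - \<rho>) / 2" "2 * p - 1 = \<rho>"
    by (simp_all add: p_def field_simps)
  ultimately show ?thesis
    unfolding p_def[symmetric] by (simp add: k_def)
qed

section \<open>The constant \<open>\<theta>(\<alpha>)\<close>\<close>

definition theta_fun :: "real \<Rightarrow> real \<Rightarrow> real" where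
  "theta_fun \<alpha> x = x powr (2 - \<alpha>) + (1 - x) / \<alpha>"

lemma theta_fun_gt_one:
  assumes "1 < \<alpha>" "\<alpha> < 2" "0 < a" "a < r" "r < 1" "1 \<le> theta_fun \<alpha> a"
  shows "1 < theta_fun \<alpha> r"
proof -
  define g where "g = 2 - \<alpha>"
  have g: "0 < g" "g < 1"
    using assms by (auto simp: g_def)
  have "(1 - r) * a powr g + (r - a) * 1
      < (1 - r) * (r powr g + g * r powr (g - 1) * (a - r)) + (r - a) * (r powr g + g * r powr (g - 1) * (1 - r))"
    using powr_less_tangent[OF g, of a r] powr_less_tangent[OF g, of 1 r] assms
    by (intro add_strict_mono mult_strict_left_mono) auto
  also have "\<dots> = (1 - a) * r powr g"
    by (simp add: algebra_simps)
  finally have chord: "(1 - r) * a powr g + (r - a) < (1 - a) * r powr g"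
    by simp
  have "1 - (1 - a) / \<alpha> \<le> a powr g"
    using assms(6) by (simp add: theta_fun_def g_def)
  then have "(1 - r) * (1 - (1 - a) / \<alpha>) \<le> (1 - r) * a powr g"
    using assms by (intro mult_left_mono) auto
  moreover have "(1 - r) * (1 - (1 - a) / \<alpha>) + (r - a) = (1 - a) * (1 - (1 - r) / \<alpha>)"
    using assms by (simp add: field_simps)
  ultimately have "(1 - a) * (1 - (1 - r) / \<alpha>) < (1 - a) * r powr g"
    using chord by linarith
  then have "1 - (1 - r) / \<alpha> < r powr g"
    using assms by simp
  then show ?thesis
    by (simp add: theta_fun_def g_def)
qed

lemma theta_fun_root_exists:
  assumes "1 < \<alpha>" "\<alpha> < 2"
  shows "\<exists>\<theta>. 0 < \<theta> \<and> \<theta> < 1 \<and> theta_fun \<alpha> \<theta> = 1"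
proof -
  define g r where "g = 2 - \<alpha>" and "r = (3 - \<alpha>) / 2"
  have g: "0 < g" "g < 1" and r: "0 < r" "r < 1"
    using assms by (auto simp: g_def r_def)
  txt \<open>At \<open>r = (3 - \<alpha>)/2\<close> the tangent bound of \<open>powr_less_tangent\<close> already gives
    \<open>theta_fun \<alpha> r \<ge> 1\<close>, with margin \<open>(\<alpha> - 1)\<^sup>3/4\<close>.\<close>
  define D where "D = r + g * (1 - r)"
  have D: "0 < D"
    using g r by (simp add: D_def add_pos_nonneg)
  have "r * 1 < r * (r powr g + g * r powr (g - 1) * (1 - r))"
    using powr_less_tangent[OF g, of 1 r] r by (intro mult_strict_left_mono) auto
  also have "\<dots> = r powr g * D"
    using r powr_mult_base[of r "g - 1"] by (simp add: D_def algebra_simps)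
  finally have "r < r powr g * D"
    by simp
  moreover have "\<alpha> * r - (r + \<alpha> - 1) * D = (\<alpha> - 1) ^ 3 / 4"
    by (simp add: D_def g_def r_def field_simps power3_eq_cube)
  moreover have "0 < (\<alpha> - 1) ^ 3"
    using assms by simp
  ultimately have "(r + \<alpha> - 1) * D < \<alpha> * (r powr g * D)"
    using assms mult_strict_left_mono[of r "r powr g * D" \<alpha>] by linarith
  then have "(r + \<alpha> - 1) * D < (\<alpha> * r powr g) * D"
    by (simp add: mult_ac)
  then have "r + \<alpha> - 1 < \<alpha> * r powr g"
    using D by simp
  then have "1 \<le> theta_fun \<alpha> r"
    using assms by (simp add: theta_fun_def g_def field_simps)
  moreover have "theta_fun \<alpha> 0 \<le> 1"
    using assms by (simp add: theta_fun_def)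
  moreover have "continuous_on {0..r} (theta_fun \<alpha>)"
    unfolding theta_fun_def using assms
    by (intro continuous_intros continuous_on_powr'[OF continuous_on_id continuous_on_const]) auto
  ultimately obtain \<theta> where "0 \<le> \<theta>" "\<theta> \<le> r" "theta_fun \<alpha> \<theta> = 1"
    using IVT'[of "theta_fun \<alpha>" 0 1 r] r by auto
  moreover have "\<theta> \<noteq> 0"
    using \<open>theta_fun \<alpha> \<theta> = 1\<close> assms by (auto simp: theta_fun_def)
  ultimately show ?thesis
    using r by (intro exI[of _ \<theta>]) auto
qed

lemma theta_root:
  assumes "1 < \<alpha>" "\<alpha> < 2"
  shows "0 < theta \<alpha> \<and> theta \<alpha> < 1 \<and> theta_fun \<alpha> (theta \<alpha>) = 1"
proof -
  let ?P = "\<lambda>\<theta>. 0 < \<theta> \<and> \<theta> < 1 \<and> theta_fun \<alpha> \<theta> = 1"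
  obtain \<theta> where \<theta>: "?P \<theta>"
    using theta_fun_root_exists[OF assms] by blast
  have "x = \<theta>" if "?P x" for x
    using theta_fun_gt_one[OF assms, of x \<theta>] theta_fun_gt_one[OF assms, of \<theta> x] \<theta> that
    by (cases x \<theta> rule: linorder_cases) auto
  then have "?P (THE \<theta>. ?P \<theta>)"
    using \<theta> by (rule theI[rotated])
  then show ?thesis
    by (simp add: theta_def theta_fun_def)
qed

lemma one_le_theta_fun:
  assumes "1 < \<alpha>" "\<alpha> < 2" "theta \<alpha> \<le> r" "r \<le> 1"
  shows "1 \<le> theta_fun \<alpha> r"
proof -
  have "r = theta \<alpha> \<or> r = 1 \<or> theta \<alpha> < r \<and> r < 1"
    using assms by auto
  then show ?thesis
    using theta_root[OF assms(1,2)] theta_fun_gt_one[OF assms(1,2), of "theta \<alpha>" r]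
    by (auto simp: theta_fun_def)
qed

text \<open>Divided by \<open>p powr (\<alpha> - 1)\<close>, with \<open>r = q / p\<close>, this is \<open>\<alpha> * theta_fun \<alpha> r \<ge> \<alpha>\<close>.\<close>
lemma powr_slope_of_theta_fun:
  fixes \<alpha> p q :: real
  assumes "0 < \<alpha>" "0 < p" "0 < q" "1 \<le> theta_fun \<alpha> (q / p)"
  shows "(\<alpha> - 1) * q powr (\<alpha> - 2) * (p - q) \<le> \<alpha> * (p powr (\<alpha> - 1) - q powr (\<alpha> - 1))"
proof -
  define r u P where "r = q / p" and "u = r powr (2 - \<alpha>)" and "P = p powr (\<alpha> - 2)"
  have pos: "0 < r" "0 < u" "0 < P"
    using assms by (simp_all add: r_def u_def P_def)
  have q: "q = r * p"
    using assms by (simp add: r_def)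
  have "r powr (\<alpha> - 2) = inverse u"
    using powr_minus[of r "2 - \<alpha>"] by (simp add: u_def)
  then have q2: "q powr (\<alpha> - 2) = P / u"
    unfolding q using pos assms powr_mult[of r p "\<alpha> - 2"] by (simp add: P_def field_simps)
  have q1: "q powr (\<alpha> - 1) = q * (P / u)"
    using assms powr_mult_base[of q "\<alpha> - 2"] by (simp add: q2[symmetric])
  have p1: "p powr (\<alpha> - 1) = p * P"
    using assms powr_mult_base[of p "\<alpha> - 2"] by (simp add: P_def)
  have "1 \<le> u + (1 - r) / \<alpha>"
    using assms(4) by (simp add: theta_fun_def u_def r_def)
  then have "0 \<le> \<alpha> * u - r - (\<alpha> - 1)"
    using assms(1) by (simp add: field_simps)
  then have "0 \<le> p * P / u * (\<alpha> * u - r - (\<alpha> - 1))"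
    using pos assms by simp
  moreover have "\<alpha> * (p powr (\<alpha> - 1) - q powr (\<alpha> - 1)) - (\<alpha> - 1) * q powr (\<alpha> - 2) * (p - q)
      = p * P / u * (\<alpha> * u - r - (\<alpha> - 1))"
    unfolding p1 q1 q2 using pos by (simp add: q field_simps)
  ultimately show ?thesis
    by linarith
qed

text \<open>Both sides say \<open>x + y + x y \<le> 1\<close>.\<close>
lemma le_one_minus_div_one_plus_iff:
  fixes x y :: real
  assumes "0 \<le> x" "0 \<le> y"
  shows "y \<le> (1 - x) / (1 + x) \<longleftrightarrow> x \<le> (1 - y) / (1 + y)"
  using assms by (simp add: field_simps add_nonneg_pos)

lemma theta_fun_noise_ratio:
  assumes "1 < \<alpha>" "\<alpha> < 2" "0 \<le> \<rho>" "\<rho> \<le> (1 - theta \<alpha>) / (1 + theta \<alpha>)"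
  shows "\<rho> < 1" and "1 \<le> theta_fun \<alpha> ((1 - \<rho>) / (1 + \<rho>))"
proof -
  have \<theta>: "0 < theta \<alpha>" "theta \<alpha> < 1"
    using theta_root[OF assms(1,2)] by auto
  then have "(1 - theta \<alpha>) / (1 + theta \<alpha>) < 1"
    by (simp add: field_simps)
  with assms show "\<rho> < 1"
    by linarith
  have "theta \<alpha> \<le> (1 - \<rho>) / (1 + \<rho>)"
    using assms \<theta> le_one_minus_div_one_plus_iff[of "theta \<alpha>" \<rho>] by simp
  moreover have "(1 - \<rho>) / (1 + \<rho>) \<le> 1"
    using assms by (simp add: field_simps)
  ultimately show "1 \<le> theta_fun \<alpha> ((1 - \<rho>) / (1 + \<rho>))"
    using assms by (intro one_le_theta_fun) auto
qed

section \<open>Maximal \<open>\<Phi>\<^sub>\<alpha>\<close>-stability\<close>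

lemma Phi_eq:
  assumes "0 \<le> s"
  shows "Phi \<alpha> s = (s powr \<alpha> - s) / (\<alpha> - 1)"
  using assms by (simp add: Phi_def right_diff_distrib powr_mult_base)

lemma Phi_noise_le_dictator:
  fixes \<alpha> \<rho> K :: real
  assumes "1 < \<alpha>" "0 \<le> \<rho>" "\<rho> \<le> 1" "0 \<le> K"
    and "\<forall>x\<in>cube n. f x \<in> {0, 1}" "cube_exp n f = 1 / 2"
    and majorant: "\<And>t s. t \<in> {(1 + \<rho>) / 2, (1 - \<rho>) / 2} \<Longrightarrow> 0 \<le> s \<Longrightarrow> s \<le> 1 \<Longrightarrow>
      s powr \<alpha> \<le> t powr \<alpha> + \<alpha> * t powr (\<alpha> - 1) * (s - t) + K * (s - t)\<^sup>2"
    and slope: "K * \<rho> \<le> \<alpha> * (((1 + \<rho>) / 2) powr (\<alpha> - 1) - ((1 - \<rho>) / 2) powr (\<alpha> - 1))"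
  shows "cube_exp n (\<lambda>x. Phi \<alpha> (noise_op n \<rho> f x))
    \<le> 1/2 * Phi \<alpha> ((1 + \<rho>) / 2) + 1/2 * Phi \<alpha> ((1 - \<rho>) / 2)"
proof (rule cube_exp_noise_le_dictator[where d = "\<lambda>t. (\<alpha> * t powr (\<alpha> - 1) - 1) / (\<alpha> - 1)"
      and c = "K / (\<alpha> - 1)"])
  fix t s :: real assume t: "t \<in> {(1 + \<rho>) / 2, (1 - \<rho>) / 2}" and s: "0 \<le> s" "s \<le> 1"
  have "0 \<le> t"
    using t assms by auto
  have "(s powr \<alpha> - s) / (\<alpha> - 1)
      \<le> (t powr \<alpha> + \<alpha> * t powr (\<alpha> - 1) * (s - t) + K * (s - t)\<^sup>2 - s) / (\<alpha> - 1)"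
    using majorant[OF t s] assms by (intro divide_right_mono) auto
  also have "\<dots> = ((t powr \<alpha> - t) + (\<alpha> * t powr (\<alpha> - 1) - 1) * (s - t) + K * (s - t)\<^sup>2) / (\<alpha> - 1)"
    by (simp add: algebra_simps)
  also have "\<dots> = (t powr \<alpha> - t) / (\<alpha> - 1) + (\<alpha> * t powr (\<alpha> - 1) - 1) / (\<alpha> - 1) * (s - t)
      + K / (\<alpha> - 1) * (s - t)\<^sup>2"
    by (simp add: add_divide_distrib)
  finally show "Phi \<alpha> s \<le> Phi \<alpha> t + (\<alpha> * t powr (\<alpha> - 1) - 1) / (\<alpha> - 1) * (s - t)
      + K / (\<alpha> - 1) * (s - t)\<^sup>2"
    unfolding Phi_eq[OF s(1)] Phi_eq[OF \<open>0 \<le> t\<close>] .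
next
  show "K / (\<alpha> - 1) * \<rho> \<le> (\<alpha> * ((1 + \<rho>) / 2) powr (\<alpha> - 1) - 1) / (\<alpha> - 1)
      - (\<alpha> * ((1 - \<rho>) / 2) powr (\<alpha> - 1) - 1) / (\<alpha> - 1)"
  proof -
    have "K / (\<alpha> - 1) * \<rho> \<le> \<alpha> * (((1 + \<rho>) / 2) powr (\<alpha> - 1) - ((1 - \<rho>) / 2) powr (\<alpha> - 1)) / (\<alpha> - 1)"
      using divide_right_mono[OF slope, of "\<alpha> - 1"] assms by simp
    then show ?thesis
      by (simp add: diff_divide_distrib[symmetric] algebra_simps)
  qed
qed (use assms in auto)

theorem corollary2p7:
  fixes n :: nat and \<rho> \<alpha> :: real and f :: "(nat \<Rightarrow> real) \<Rightarrow> real"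
  assumes "n \<ge> 1"
    and "(1 < \<alpha> \<and> \<alpha> < 2 \<and> 0 \<le> \<rho> \<and> \<rho> \<le> (1 - theta \<alpha>) / (1 + theta \<alpha>))
         \<or> (2 \<le> \<alpha> \<and> \<alpha> \<le> 3 \<and> 0 \<le> \<rho> \<and> \<rho> \<le> 1)"
    and "\<forall>x\<in>cube n. f x \<in> {0, 1}"
    and "cube_exp n f = 1 / 2"
  shows "cube_exp n (\<lambda>x. Phi \<alpha> (noise_op n \<rho> f x))
           \<le> 1/2 * Phi \<alpha> ((1 + \<rho>) / 2) + 1/2 * Phi \<alpha> ((1 - \<rho>) / 2)"
  using assms(2)
proof (elim disjE conjE)
  assume \<alpha>: "1 < \<alpha>" "\<alpha> < 2" and \<rho>: "0 \<le> \<rho>" "\<rho> \<le> (1 - theta \<alpha>) / (1 + theta \<alpha>)"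
  note ratio = theta_fun_noise_ratio[OF \<alpha> \<rho>]
  define p q where "p = (1 + \<rho>) / 2" and "q = (1 - \<rho>) / 2"
  have pq: "0 < q" "q \<le> p" "p - q = \<rho>" "q / p = (1 - \<rho>) / (1 + \<rho>)"
    using \<rho> ratio(1) by (auto simp: p_def q_def field_simps)
  show ?thesis
  proof (rule Phi_noise_le_dictator[where K = "(\<alpha> - 1) * q powr (\<alpha> - 2)"])
    show "s powr \<alpha> \<le> t powr \<alpha> + \<alpha> * t powr (\<alpha> - 1) * (s - t) + (\<alpha> - 1) * q powr (\<alpha> - 2) * (s - t)\<^sup>2"
      if "t \<in> {(1 + \<rho>) / 2, (1 - \<rho>) / 2}" "0 \<le> s" for t s
      using that \<alpha> pq by (intro powr_quadratic_majorant_le2) (auto simp: p_def q_def)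
    show "(\<alpha> - 1) * q powr (\<alpha> - 2) * \<rho> \<le> \<alpha> * (((1 + \<rho>) / 2) powr (\<alpha> - 1) - ((1 - \<rho>) / 2) powr (\<alpha> - 1))"
      using powr_slope_of_theta_fun[of \<alpha> p q] \<alpha> pq ratio(2) unfolding p_def q_def by simp
  qed (use \<alpha> \<rho> ratio(1) assms(3,4) in auto)
next
  assume \<alpha>: "2 \<le> \<alpha>" "\<alpha> \<le> 3" and \<rho>: "0 \<le> \<rho>" "\<rho> \<le> 1"
  show ?thesis
  proof (rule Phi_noise_le_dictator[where K = "\<alpha> * (\<alpha> - 1) / 2"])
    show "s powr \<alpha> \<le> t powr \<alpha> + \<alpha> * t powr (\<alpha> - 1) * (s - t) + \<alpha> * (\<alpha> - 1) / 2 * (s - t)\<^sup>2"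
      if "t \<in> {(1 + \<rho>) / 2, (1 - \<rho>) / 2}" "0 \<le> s" "s \<le> 1" for t s
      using that \<alpha> \<rho> by (intro powr_quadratic_majorant_ge2) auto
    show "\<alpha> * (\<alpha> - 1) / 2 * \<rho> \<le> \<alpha> * (((1 + \<rho>) / 2) powr (\<alpha> - 1) - ((1 - \<rho>) / 2) powr (\<alpha> - 1))"
      using mult_left_mono[OF powr_diff_half_ge[of "\<alpha> - 1" \<rho>], of \<alpha>] \<alpha> \<rho> by (simp add: mult_ac)
  qed (use \<alpha> \<rho> assms(3,4) in auto)
qed

end
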